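(* Let $m,p,n$ be positive integers with $p\mid m$, $n>1$. (i) For $\lambda>1$, $\mathbf M_{\boldsymbol\theta}=(M_{\theta_1},\ldots,M_{\theta_n})$ is a $\boldsymbol\Theta_n$-contraction on $L^2(\mathbb D^n,dV^{(\lambda)})$. (ii) For $\lambda\ge1$, the restriction of $\mathbf M_{\boldsymbol\theta}$ to $\mathbb A^{(\lambda)}(\mathbb D^n)$ is a $\boldsymbol\Theta_n$-contraction.
   Context: $\theta_i(z)=s_i(z_1^m,\ldots,z_n^m)$ for $1\le i\le n-1$ ($s_i$ elementary symmetric), $\theta_n(z)=(z_1\cdots z_n)^{m/p}$; a $\boldsymbol\Theta_n$-contraction is a commuting tuple $T$ with $\|f(T)\|\le\sup_{\boldsymbol\theta(\overline{\mathbb D}^n)}|f|$ for all polynomials $f$. For $\lambda>1$, $dV^{(\lambda)}=\big(\frac{\lambda-1}{\pi}\big)^n\prod_{i=1}^n(1-|z_i|^2)^{\lambda-2}dV$ ($dV$ Lebesgue measure on $\mathbb D^n$) and $\mathbb A^{(\lambda)}(\mathbb D^n)$ is the space of holomorphic functions in $L^2(\mathbb D^n,dV^{(\lambda)})$, with reproducing kernel $\prod_{i=1}^n(1-z_i\bar w_i)^{-\lambda}$; $\mathbb A^{(1)}(\mathbb D^n)$ denotes the Hardy space $H^2(\mathbb D^n)$ with kernel $\prod_i(1-z_i\bar w_i)^{-1}$. $M_{\theta_i}$ is multiplication by $\theta_i$. *)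

theory Defs
  imports "HOL-Analysis.Analysis"
begin

text \<open>Points of the polydisc are extensional functions on the index set {..<n}
  (coordinate i+1 of the paper is index i here), as for product measures PiM.\<close>

definition polydisc :: "nat \<Rightarrow> (nat \<Rightarrow> complex) set" where
  "polydisc n = PiE {..<n} (\<lambda>_. ball 0 1)"

definition cpolydisc :: "nat \<Rightarrow> (nat \<Rightarrow> complex) set" where
  "cpolydisc n = PiE {..<n} (\<lambda>_. cball 0 1)"

text \<open>The symmetrized map: theta m p n j z is theta_{j+1}(z) of the paper, j < n.\<close>
definition theta :: "nat \<Rightarrow> nat \<Rightarrow> nat \<Rightarrow> nat \<Rightarrow> (nat \<Rightarrow> complex) \<Rightarrow> complex" where
  "theta m p n j z =
     (if j + 1 < n
      then (\<Sum>S\<in>{S. S \<subseteq> {..<n} \<and> card S = j + 1}. \<Prod>l\<in>S. z l ^ m)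
      else (\<Prod>l<n. z l) ^ (m div p))"

definition theta_map :: "nat \<Rightarrow> nat \<Rightarrow> nat \<Rightarrow> (nat \<Rightarrow> complex) \<Rightarrow> (nat \<Rightarrow> complex)" where
  "theta_map m p n z = restrict (\<lambda>j. theta m p n j z) {..<n}"

definition is_poly_coeffs :: "nat \<Rightarrow> ((nat \<Rightarrow> nat) \<Rightarrow> complex) \<Rightarrow> bool" where
  "is_poly_coeffs n c \<longleftrightarrow> finite {\<alpha>. c \<alpha> \<noteq> 0} \<and> (\<forall>\<alpha>. c \<alpha> \<noteq> 0 \<longrightarrow> (\<forall>i\<ge>n. \<alpha> i = 0))"

definition mpoly_eval :: "nat \<Rightarrow> ((nat \<Rightarrow> nat) \<Rightarrow> complex) \<Rightarrow> (nat \<Rightarrow> complex) \<Rightarrow> complex" where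
  "mpoly_eval n c w = (\<Sum>\<alpha>\<in>{\<alpha>. c \<alpha> \<noteq> 0}. c \<alpha> * (\<Prod>i<n. w i ^ \<alpha> i))"

definition op_poly :: "nat \<Rightarrow> ((nat \<Rightarrow> nat) \<Rightarrow> complex) \<Rightarrow> (nat \<Rightarrow> ('a \<Rightarrow> complex) \<Rightarrow> ('a \<Rightarrow> complex))
                       \<Rightarrow> ('a \<Rightarrow> complex) \<Rightarrow> ('a \<Rightarrow> complex)" where
  "op_poly n c T h = (\<lambda>x. \<Sum>\<alpha>\<in>{\<alpha>. c \<alpha> \<noteq> 0}. c \<alpha> * fold (\<lambda>i. T i ^^ \<alpha> i) [0..<n] h x)"

definition theta_contraction ::
  "nat \<Rightarrow> nat \<Rightarrow> nat \<Rightarrow> ('a \<Rightarrow> complex) set \<Rightarrow> (('a \<Rightarrow> complex) \<Rightarrow> real)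
     \<Rightarrow> (nat \<Rightarrow> ('a \<Rightarrow> complex) \<Rightarrow> ('a \<Rightarrow> complex)) \<Rightarrow> bool" where
  "theta_contraction m p n V N T \<longleftrightarrow>
     (\<forall>j<n. \<forall>h\<in>V. T j h \<in> V) \<and>
     (\<forall>j<n. \<forall>h\<in>V. \<forall>g\<in>V. \<forall>a::complex.
         T j (\<lambda>x. a * h x + g x) = (\<lambda>x. a * T j h x + T j g x)) \<and>
     (\<forall>j<n. \<forall>k<n. \<forall>h\<in>V. T j (T k h) = T k (T j h)) \<and>
     (\<forall>c. is_poly_coeffs n c \<longrightarrow>
        (\<forall>h\<in>V. N (op_poly n c T h)
                 \<le> (SUP w\<in>theta_map m p n ` cpolydisc n. cmod (mpoly_eval n c w)) * N h))"

definition mult_op :: "('a \<Rightarrow> complex) \<Rightarrow> ('a \<Rightarrow> complex) \<Rightarrow> ('a \<Rightarrow> complex)" where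
  "mult_op f h = (\<lambda>z. f z * h z)"

definition disc_measure :: "real \<Rightarrow> complex measure" where
  "disc_measure lam = density lborel
     (\<lambda>z. ennreal (indicator (ball 0 1) z * ((lam - 1) / pi) * (1 - (cmod z)\<^sup>2) powr (lam - 2)))"

definition polydisc_measure :: "nat \<Rightarrow> real \<Rightarrow> (nat \<Rightarrow> complex) measure" where
  "polydisc_measure n lam = PiM {..<n} (\<lambda>_. disc_measure lam)"

definition L2space :: "nat \<Rightarrow> real \<Rightarrow> ((nat \<Rightarrow> complex) \<Rightarrow> complex) set" where
  "L2space n lam = {h. h \<in> borel_measurable (polydisc_measure n lam) \<and>
                       integrable (polydisc_measure n lam) (\<lambda>z. (cmod (h z))\<^sup>2)}"

definition L2norm :: "nat \<Rightarrow> real \<Rightarrow> ((nat \<Rightarrow> complex) \<Rightarrow> complex) \<Rightarrow> real" where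
  "L2norm n lam h = sqrt (\<integral>z. (cmod (h z))\<^sup>2 \<partial>polydisc_measure n lam)"

definition holo_polydisc :: "nat \<Rightarrow> ((nat \<Rightarrow> complex) \<Rightarrow> complex) \<Rightarrow> bool" where
  "holo_polydisc n h \<longleftrightarrow> continuous_on (polydisc n) h \<and>
     (\<forall>z\<in>polydisc n. \<forall>i<n. (\<lambda>w. h (z(i := w))) holomorphic_on ball 0 1)"

text \<open>Hardy space: normalized Haar measure on the torus, parametrized by [0,2pi]^n.\<close>
definition circle_measure :: "real measure" where
  "circle_measure = density lborel (\<lambda>t. ennreal (indicator {0..2*pi} t / (2*pi)))"

definition hardy_int :: "nat \<Rightarrow> ((nat \<Rightarrow> complex) \<Rightarrow> complex) \<Rightarrow> real \<Rightarrow> real" where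
  "hardy_int n h r = (\<integral>t. (cmod (h (restrict (\<lambda>i. complex_of_real r * cis (t i)) {..<n})))\<^sup>2
                         \<partial>PiM {..<n} (\<lambda>_. circle_measure))"

definition hardy_space :: "nat \<Rightarrow> ((nat \<Rightarrow> complex) \<Rightarrow> complex) set" where
  "hardy_space n = {h. holo_polydisc n h \<and> bdd_above (hardy_int n h ` {0<..<1})}"

definition hardy_norm :: "nat \<Rightarrow> ((nat \<Rightarrow> complex) \<Rightarrow> complex) \<Rightarrow> real" where
  "hardy_norm n h = sqrt (SUP r\<in>{0<..<1}. hardy_int n h r)"

text \<open>A^(lambda)(D^n): weighted Bergman space for lambda > 1, Hardy space for lambda = 1.\<close>
definition A_space :: "nat \<Rightarrow> real \<Rightarrow> ((nat \<Rightarrow> complex) \<Rightarrow> complex) set" where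
  "A_space n lam = (if lam = 1 then hardy_space n
                    else {h \<in> L2space n lam. holo_polydisc n h})"

definition A_norm :: "nat \<Rightarrow> real \<Rightarrow> ((nat \<Rightarrow> complex) \<Rightarrow> complex) \<Rightarrow> real" where
  "A_norm n lam = (if lam = 1 then hardy_norm n else L2norm n lam)"

end

theory Submission
  imports Defs "HOL-Probability.Probability"
begin

(* The tuple M_theta consists of multiplication operators, so f(M_theta) is multiplication by
   f o theta. On the open polydisc |f o theta| is bounded by the supremum of |f| over the compact
   set theta(closed polydisc), and multiplication by a function bounded by B on the polydisc has
   norm at most B: on L^2(dV^(lambda)) because the measure lives on the polydisc, and on the Hardy
   space because its norm is a supremum of integrals over tori of radius r < 1 inside the
   polydisc. Since every theta_j is holomorphic, the spaces A^(lambda) are invariant. *)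

lemma funpow_mult_op: "(mult_op f ^^ k) h = mult_op (\<lambda>x. f x ^ k) h"
  by (induction k arbitrary: h) (auto simp: mult_op_def)

lemma fold_funpow_mult_op:
  "fold (\<lambda>i. mult_op (\<phi> i) ^^ a i) xs h = mult_op (\<lambda>x. \<Prod>i\<leftarrow>xs. \<phi> i x ^ a i) h"
  by (induction xs arbitrary: h) (auto simp: funpow_mult_op mult_op_def mult.assoc)

lemma op_poly_mult_op:
  "op_poly n c (\<lambda>j. mult_op (\<phi> j)) h = mult_op (\<lambda>x. mpoly_eval n c (\<lambda>j. \<phi> j x)) h"
  by (simp add: op_poly_def mpoly_eval_def fold_funpow_mult_op prod.distinct_set_conv_list[symmetric]
      atLeast0LessThan mult_op_def sum_distrib_right mult.assoc)

lemma mpoly_eval_cong: "(\<And>i. i < n \<Longrightarrow> w i = w' i) \<Longrightarrow> mpoly_eval n c w = mpoly_eval n c w'"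
  unfolding mpoly_eval_def by (intro sum.cong refl arg_cong2[where f = "(*)"] prod.cong) auto

lemma mpoly_eval_theta_map:
  "mpoly_eval n c (theta_map m p n z) = mpoly_eval n c (\<lambda>j. theta m p n j z)"
  by (rule mpoly_eval_cong) (simp add: theta_map_def)

lemma compact_PiE:
  fixes K :: "'a \<Rightarrow> 'b::topological_space set"
  assumes "\<And>i. i \<in> I \<Longrightarrow> compact (K i)"
  shows "compact (PiE I K)"
proof -
  have "PiE I K = PiE UNIV (\<lambda>i. if i \<in> I then K i else {undefined})"
    by (auto simp: PiE_iff extensional_def split: if_splits)
  moreover have "compactin (product_topology (\<lambda>_. euclidean) UNIV)
                   (PiE UNIV (\<lambda>i. if i \<in> I then K i else {undefined}))"
    using assms by (subst compactin_PiE) auto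
  ultimately show ?thesis
    by (simp add: euclidean_product_topology)
qed

lemma polydisc_subset_cpolydisc: "polydisc n \<subseteq> cpolydisc n"
  unfolding polydisc_def cpolydisc_def by (intro PiE_mono) auto

lemma continuous_on_coordinate [continuous_intros]: "continuous_on S (\<lambda>x. x i)"
  using continuous_on_subset[OF continuous_on_product_coordinates subset_UNIV] .

lemma continuous_on_theta: "continuous_on S (theta m p n j)"
  unfolding theta_def[abs_def] by (cases "j + 1 < n") (auto intro!: continuous_intros)

lemma bdd_above_mpoly_eval_theta_image:
  "bdd_above ((\<lambda>w. cmod (mpoly_eval n c w)) ` theta_map m p n ` cpolydisc n)"
proof -
  have "compact ((\<lambda>z. cmod (mpoly_eval n c (\<lambda>j. theta m p n j z))) ` cpolydisc n)"
    unfolding cpolydisc_def mpoly_eval_def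
    by (intro compact_continuous_image compact_PiE continuous_intros continuous_on_theta) auto
  then show ?thesis
    by (simp add: image_image mpoly_eval_theta_map compact_imp_bounded bounded_imp_bdd_above)
qed

lemma cmod_mpoly_eval_theta_le_SUP:
  assumes "z \<in> cpolydisc n"
  shows "cmod (mpoly_eval n c (\<lambda>j. theta m p n j z))
           \<le> (SUP w\<in>theta_map m p n ` cpolydisc n. cmod (mpoly_eval n c w))"
  using cSUP_upper[OF assms bdd_above_mpoly_eval_theta_image[unfolded image_image]]
  by (simp add: image_image mpoly_eval_theta_map)

lemma bounded_theta_on_cpolydisc: "\<exists>B. \<forall>z\<in>cpolydisc n. cmod (theta m p n j z) \<le> B"
proof -
  have "compact (theta m p n j ` cpolydisc n)"
    unfolding cpolydisc_def by (intro compact_continuous_image compact_PiE continuous_on_theta) auto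
  then show ?thesis
    by (auto dest!: compact_imp_bounded simp: bounded_iff)
qed

lemma holo_polydisc_mult:
  assumes "holo_polydisc n g" "holo_polydisc n h"
  shows "holo_polydisc n (mult_op g h)"
  using assms unfolding holo_polydisc_def mult_op_def
  by (simp add: continuous_on_mult holomorphic_on_mult)

lemma holo_polydisc_theta: "holo_polydisc n (theta m p n j)"
  unfolding holo_polydisc_def
proof (intro conjI ballI allI impI continuous_on_theta)
  fix z :: "nat \<Rightarrow> complex" and i
  have coord: "(\<lambda>w. if l = i then w else z l) holomorphic_on ball 0 1" for l
    by (cases "l = i") auto
  show "(\<lambda>w. theta m p n j (z(i := w))) holomorphic_on ball 0 1"
    unfolding theta_def by (cases "j + 1 < n") (auto intro!: holomorphic_intros coord)
qed

lemma holo_polydisc_mpoly_eval: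
  assumes "\<And>j. j < n \<Longrightarrow> holo_polydisc n (\<phi> j)"
  shows "holo_polydisc n (\<lambda>z. mpoly_eval n c (\<lambda>j. \<phi> j z))"
  unfolding holo_polydisc_def mpoly_eval_def
proof (intro conjI ballI allI impI)
  show "continuous_on (polydisc n) (\<lambda>z. \<Sum>\<alpha> | c \<alpha> \<noteq> 0. c \<alpha> * (\<Prod>i<n. \<phi> i z ^ \<alpha> i))"
    using assms unfolding holo_polydisc_def
    by (intro continuous_on_sum continuous_on_mult continuous_on_const continuous_on_prod
        continuous_on_power) auto
  fix z i assume "z \<in> polydisc n" "i < n"
  then show "(\<lambda>w. \<Sum>\<alpha> | c \<alpha> \<noteq> 0. c \<alpha> * (\<Prod>l<n. \<phi> l (z(i := w)) ^ \<alpha> l))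
               holomorphic_on ball 0 1"
    using assms unfolding holo_polydisc_def
    by (intro holomorphic_on_sum holomorphic_on_mult holomorphic_on_const holomorphic_on_prod
        holomorphic_on_power) auto
qed

lemma borel_measurable_PiM_component:
  assumes "i \<in> I" "sets (M i) = sets borel"
  shows "(\<lambda>x. x i) \<in> borel_measurable (PiM I M)"
  using measurable_component_singleton[OF assms(1), of M] measurable_cong_sets[OF refl assms(2)]
  by blast

lemma measurable_theta:
  assumes "\<And>i. sets (M i) = sets (borel :: complex measure)"
  shows "theta m p n j \<in> borel_measurable (PiM {..<n} M)"
proof -
  have "(\<lambda>z. z l) \<in> borel_measurable (PiM {..<n} M)" if "l < n" for l
    using that assms by (intro borel_measurable_PiM_component) auto
  then show ?thesis
    unfolding theta_def[abs_def]
    by (cases "j + 1 < n")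
      (auto intro!: borel_measurable_sum borel_measurable_prod borel_measurable_power)
qed

lemma measurable_mpoly_eval:
  assumes "\<And>j. j < n \<Longrightarrow> \<phi> j \<in> borel_measurable M"
  shows "(\<lambda>z. mpoly_eval n c (\<lambda>j. \<phi> j z)) \<in> borel_measurable M"
  using assms unfolding mpoly_eval_def
  by (intro borel_measurable_sum borel_measurable_times borel_measurable_const
      borel_measurable_prod borel_measurable_power) auto

lemma polydisc_bound_nonneg:
  assumes "\<And>z. z \<in> polydisc n \<Longrightarrow> cmod (g z) \<le> B"
  shows "0 \<le> B"
proof -
  have "restrict (\<lambda>_. 0) {..<n} \<in> polydisc n"
    by (simp add: polydisc_def)
  from assms[OF this] show ?thesis
    using norm_ge_zero order_trans by blast
qed

lemma integral_cmod_sq_mult_le: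
  fixes g h :: "'a \<Rightarrow> complex"
  assumes [measurable]: "g \<in> borel_measurable M" "h \<in> borel_measurable M"
    and h: "integrable M (\<lambda>x. (cmod (h x))\<^sup>2)"
    and bound: "AE x in M. cmod (g x) \<le> B"
  shows "integrable M (\<lambda>x. (cmod (g x * h x))\<^sup>2)"
    and "(\<integral>x. (cmod (g x * h x))\<^sup>2 \<partial>M) \<le> B\<^sup>2 * (\<integral>x. (cmod (h x))\<^sup>2 \<partial>M)"
proof -
  have le: "AE x in M. (cmod (g x * h x))\<^sup>2 \<le> B\<^sup>2 * (cmod (h x))\<^sup>2"
    using bound by eventually_elim
      (simp add: norm_mult power_mult_distrib mult_right_mono power_mono)
  have hB: "integrable M (\<lambda>x. B\<^sup>2 * (cmod (h x))\<^sup>2)"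
    using h by (rule integrable_mult_right)
  show int: "integrable M (\<lambda>x. (cmod (g x * h x))\<^sup>2)"
    by (rule Bochner_Integration.integrable_bound[OF hB]) (use le in \<open>auto elim!: eventually_mono\<close>)
  show "(\<integral>x. (cmod (g x * h x))\<^sup>2 \<partial>M) \<le> B\<^sup>2 * (\<integral>x. (cmod (h x))\<^sup>2 \<partial>M)"
    using integral_mono_AE[OF int hB le] by simp
qed

lemma sets_disc_measure [simp]: "sets (disc_measure lam) = sets borel"
  by (simp add: disc_measure_def)

lemma disc_density_measurable:
  "(\<lambda>z::complex. ennreal (indicator (ball 0 1) z * ((lam - 1) / pi) * (1 - (cmod z)\<^sup>2) powr (lam - 2)))
     \<in> borel_measurable lborel"
  unfolding measurable_lborel1
  by (intro measurable_compose[OF _ measurable_ennreal] borel_measurable_times borel_measurable_indicator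
      powr_real_measurable borel_measurable_const borel_measurable_diff borel_measurable_power
      borel_measurable_norm measurable_ident) auto

lemma emeasure_disc_measure_outside: "emeasure (disc_measure lam) (- ball 0 1) = 0"
  unfolding disc_measure_def
  by (subst emeasure_density[OF disc_density_measurable])
    (auto intro!: nn_integral_zero' simp: indicator_def)

lemma sigma_finite_disc_measure: "sigma_finite_measure (disc_measure lam)"
  using sigma_finite_measure.sigma_finite_iff_density_finite[OF sigma_finite_lborel
      disc_density_measurable]
  by (simp add: disc_measure_def)

lemma AE_polydisc_measure: "AE z in polydisc_measure n lam. z \<in> polydisc n"
proof -
  interpret product_sigma_finite "\<lambda>_. disc_measure lam"
    by (simp add: product_sigma_finite_def sigma_finite_disc_measure)
  have "AE z in polydisc_measure n lam. z i \<in> ball 0 1" if "i < n" for i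
  proof (rule AE_I')
    let ?N = "PiE {..<n} (\<lambda>l. if l = i then - ball 0 1 else UNIV)"
    show "?N \<in> null_sets (polydisc_measure n lam)"
      using that emeasure_disc_measure_outside unfolding polydisc_measure_def
      by (auto intro!: null_setsI sets_PiM_I_finite simp: emeasure_PiM)
    show "{z \<in> space (polydisc_measure n lam). z i \<notin> ball 0 1} \<subseteq> ?N"
      using that by (auto simp: polydisc_measure_def space_PiM PiE_iff extensional_def)
  qed
  then have "AE z in polydisc_measure n lam. \<forall>i\<in>{..<n}. z i \<in> ball 0 1"
    by (intro AE_finite_allI) auto
  with AE_space show ?thesis
    by eventually_elim (auto simp: polydisc_def polydisc_measure_def space_PiM PiE_iff)
qed

lemma L2space_mult_op:
  assumes g: "g \<in> borel_measurable (polydisc_measure n lam)"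
    and bound: "\<And>z. z \<in> polydisc n \<Longrightarrow> cmod (g z) \<le> B"
    and h: "h \<in> L2space n lam"
  shows "mult_op g h \<in> L2space n lam \<and> L2norm n lam (mult_op g h) \<le> B * L2norm n lam h"
proof -
  let ?M = "polydisc_measure n lam"
  have "0 \<le> B"
    using bound by (rule polydisc_bound_nonneg)
  have "AE z in ?M. cmod (g z) \<le> B"
    using AE_polydisc_measure by eventually_elim (rule bound)
  moreover have hm: "h \<in> borel_measurable ?M" and "integrable ?M (\<lambda>z. (cmod (h z))\<^sup>2)"
    using h by (auto simp: L2space_def)
  ultimately have int: "integrable ?M (\<lambda>z. (cmod (g z * h z))\<^sup>2)"
    and le: "(\<integral>z. (cmod (g z * h z))\<^sup>2 \<partial>?M) \<le> B\<^sup>2 * (\<integral>z. (cmod (h z))\<^sup>2 \<partial>?M)"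
    using integral_cmod_sq_mult_le[OF g hm] by blast+
  have "L2norm n lam (mult_op g h) \<le> sqrt (B\<^sup>2 * (\<integral>z. (cmod (h z))\<^sup>2 \<partial>?M))"
    using le unfolding L2norm_def mult_op_def by (rule real_sqrt_le_mono)
  also have "\<dots> = B * L2norm n lam h"
    using \<open>0 \<le> B\<close> by (simp add: L2norm_def real_sqrt_mult)
  finally show ?thesis
    using g hm int by (simp add: L2space_def mult_op_def)
qed

definition torus_point :: "nat \<Rightarrow> real \<Rightarrow> (nat \<Rightarrow> real) \<Rightarrow> nat \<Rightarrow> complex" where
  "torus_point n r t = restrict (\<lambda>i. complex_of_real r * cis (t i)) {..<n}"

lemma hardy_int_torus_point:
  "hardy_int n h r = (\<integral>t. (cmod (h (torus_point n r t)))\<^sup>2 \<partial>PiM {..<n} (\<lambda>_. circle_measure))"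
  by (simp add: hardy_int_def torus_point_def)

lemma torus_point_in_PiE_cball: "0 \<le> r \<Longrightarrow> torus_point n r t \<in> PiE {..<n} (\<lambda>_. cball 0 r)"
  by (auto simp: torus_point_def norm_mult)

lemma PiE_cball_subset_polydisc: "r < 1 \<Longrightarrow> PiE {..<n} (\<lambda>_. cball 0 r) \<subseteq> polydisc n"
  unfolding polydisc_def by (rule PiE_mono) auto

lemma continuous_on_torus_point: "continuous_on S (torus_point n r)"
proof (intro continuous_on_coordinatewise_then_product)
  fix i
  show "continuous_on S (\<lambda>t. torus_point n r t i)"
    unfolding torus_point_def
    by (cases "i < n")
      (simp_all add: continuous_on_mult continuous_on_const continuous_on_cis continuous_on_coordinate)
qed

lemma measurable_torus_point_comp:
  assumes k: "continuous_on (polydisc n) k" and r: "0 \<le> r" "r < 1"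
    and sets_M: "\<And>i. sets (M i) = sets (borel :: real measure)"
  shows "(\<lambda>t. k (torus_point n r t)) \<in> borel_measurable (PiM {..<n} M)"
proof -
  (* Continuity only gives Borel measurability for the product topology on all of nat => real,
     which is not the sigma algebra of PiM {..<n} M; the extension by zero E mediates. *)
  define E :: "(nat \<Rightarrow> real) \<Rightarrow> nat \<Rightarrow> real" where "E t = (\<lambda>i. if i < n then t i else 0)" for t
  have "continuous_on UNIV (\<lambda>t. k (torus_point n r t))"
    using torus_point_in_PiE_cball[OF r(1)] PiE_cball_subset_polydisc[OF r(2)]
    by (intro continuous_on_compose2[OF k continuous_on_torus_point]) blast+
  then have km: "(\<lambda>t. k (torus_point n r t)) \<in> borel_measurable borel"
    by (rule borel_measurable_continuous_onI)
  moreover have Em: "E \<in> borel_measurable (PiM {..<n} M)"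
  proof (rule measurable_coordinatewise_then_product)
    fix i
    show "(\<lambda>t. E t i) \<in> borel_measurable (PiM {..<n} M)"
      using sets_M by (cases "i < n") (simp_all add: E_def borel_measurable_PiM_component)
  qed
  have "torus_point n r (E t) = torus_point n r t" for t
    unfolding torus_point_def E_def by (rule restrict_ext) simp
  with measurable_compose[OF Em km] show ?thesis
    by simp
qed

lemma prob_space_circle_measure: "prob_space circle_measure"
proof (rule prob_spaceI)
  have "emeasure circle_measure UNIV
          = (\<integral>\<^sup>+ t. ennreal (1 / (2*pi)) * indicator {0..2*pi} t \<partial>lborel)"
    unfolding circle_measure_def
    by (subst emeasure_density) (auto intro!: nn_integral_cong simp: indicator_def)
  also have "\<dots> = ennreal (1 / (2*pi)) * ennreal (2*pi)"
    by (subst nn_integral_cmult_indicator) auto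
  also have "\<dots> = 1"
    by (simp flip: ennreal_mult)
  finally show "emeasure circle_measure (space circle_measure) = 1"
    by (simp add: circle_measure_def)
qed

lemma integrable_torus_point_comp:
  assumes k: "continuous_on (polydisc n) k" and r: "0 \<le> r" "r < 1"
  shows "integrable (PiM {..<n} (\<lambda>_. circle_measure)) (\<lambda>t. (cmod (k (torus_point n r t)))\<^sup>2)"
proof -
  interpret prob_space "PiM {..<n} (\<lambda>_. circle_measure)"
    by (intro prob_space_PiM prob_space_circle_measure)
  have "compact (k ` PiE {..<n} (\<lambda>_. cball 0 r))"
    using PiE_cball_subset_polydisc[OF r(2)]
    by (intro compact_continuous_image compact_PiE continuous_on_subset[OF k]) auto
  then obtain C where C: "\<forall>w \<in> k ` PiE {..<n} (\<lambda>_. cball 0 r). cmod w \<le> C"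
    by (meson bounded_iff compact_imp_bounded)
  show ?thesis
  proof (rule integrable_const_bound[where B = "C\<^sup>2"])
    show "AE t in PiM {..<n} (\<lambda>_. circle_measure).
            norm ((cmod (k (torus_point n r t)))\<^sup>2) \<le> C\<^sup>2"
      using C torus_point_in_PiE_cball[OF r(1)] by (simp add: power_mono)
    show "(\<lambda>t. (cmod (k (torus_point n r t)))\<^sup>2)
            \<in> borel_measurable (PiM {..<n} (\<lambda>_. circle_measure))"
      using measurable_torus_point_comp[OF k r] by (simp add: circle_measure_def)
  qed
qed

lemma hardy_int_mult_op_le:
  assumes g: "continuous_on (polydisc n) g"
    and bound: "\<And>z. z \<in> polydisc n \<Longrightarrow> cmod (g z) \<le> B"
    and h: "continuous_on (polydisc n) h" and r: "0 \<le> r" "r < 1"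
  shows "hardy_int n (mult_op g h) r \<le> B\<^sup>2 * hardy_int n h r"
proof -
  let ?Q = "PiM {..<n} (\<lambda>_. circle_measure)"
  have meas: "(\<lambda>t. k (torus_point n r t)) \<in> borel_measurable ?Q"
    if "continuous_on (polydisc n) k" for k
    by (rule measurable_torus_point_comp[OF that r]) (simp add: circle_measure_def)
  have "AE t in ?Q. cmod (g (torus_point n r t)) \<le> B"
    using torus_point_in_PiE_cball[OF r(1)] PiE_cball_subset_polydisc[OF r(2)]
    by (intro AE_I2 bound) blast
  then show ?thesis
    unfolding hardy_int_torus_point mult_op_def
    by (rule integral_cmod_sq_mult_le(2)[OF meas[OF g] meas[OF h]
          integrable_torus_point_comp[OF h r]])
qed

lemma hardy_space_mult_op:
  assumes g: "holo_polydisc n g" and bound: "\<And>z. z \<in> polydisc n \<Longrightarrow> cmod (g z) \<le> B"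
    and h: "h \<in> hardy_space n"
  shows "mult_op g h \<in> hardy_space n \<and> hardy_norm n (mult_op g h) \<le> B * hardy_norm n h"
proof -
  let ?H = "SUP r\<in>{0<..<1::real}. hardy_int n h r"
  have "0 \<le> B"
    using bound by (rule polydisc_bound_nonneg)
  have holo: "holo_polydisc n h" and bdd: "bdd_above (hardy_int n h ` {0<..<1})"
    using h by (auto simp: hardy_space_def)
  have le: "hardy_int n (mult_op g h) r \<le> B\<^sup>2 * ?H" if "r \<in> {0<..<1}" for r
  proof -
    have "hardy_int n (mult_op g h) r \<le> B\<^sup>2 * hardy_int n h r"
      using g holo that by (intro hardy_int_mult_op_le bound) (auto simp: holo_polydisc_def)
    also have "\<dots> \<le> B\<^sup>2 * ?H"
      by (intro mult_left_mono cSUP_upper that bdd) auto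
    finally show ?thesis .
  qed
  have "hardy_norm n (mult_op g h) \<le> sqrt (B\<^sup>2 * ?H)"
    unfolding hardy_norm_def by (intro real_sqrt_le_mono cSUP_least le) auto
  also have "\<dots> = B * hardy_norm n h"
    using \<open>0 \<le> B\<close> by (simp add: hardy_norm_def real_sqrt_mult)
  finally have "hardy_norm n (mult_op g h) \<le> B * hardy_norm n h" .
  moreover have "bdd_above (hardy_int n (mult_op g h) ` {0<..<1})"
    using le by (intro bdd_aboveI2)
  ultimately show ?thesis
    using holo_polydisc_mult[OF g holo] by (simp add: hardy_space_def)
qed

lemma A_space_mult_op:
  assumes g: "holo_polydisc n g" "g \<in> borel_measurable (polydisc_measure n lam)"
    and bound: "\<And>z. z \<in> polydisc n \<Longrightarrow> cmod (g z) \<le> B"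
    and h: "h \<in> A_space n lam"
  shows "mult_op g h \<in> A_space n lam \<and> A_norm n lam (mult_op g h) \<le> B * A_norm n lam h"
proof (cases "lam = 1")
  case True
  then show ?thesis
    using h hardy_space_mult_op[OF g(1) bound] by (simp add: A_space_def A_norm_def)
next
  case False
  then show ?thesis
    using h L2space_mult_op[OF g(2) bound] holo_polydisc_mult[OF g(1)]
    by (simp add: A_space_def A_norm_def)
qed

lemma theta_contraction_mult_opI:
  assumes mult: "\<And>g B h. P g \<Longrightarrow> (\<And>z. z \<in> polydisc n \<Longrightarrow> cmod (g z) \<le> B) \<Longrightarrow> h \<in> V
                    \<Longrightarrow> mult_op g h \<in> V \<and> N (mult_op g h) \<le> B * N h"
    and P_theta: "\<And>j. j < n \<Longrightarrow> P (theta m p n j)"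
    and P_poly: "\<And>c. P (\<lambda>z. mpoly_eval n c (\<lambda>j. theta m p n j z))"
  shows "theta_contraction m p n V N (\<lambda>j. mult_op (theta m p n j))"
  unfolding theta_contraction_def
proof (intro conjI allI impI ballI)
  fix j h assume "j < n" "h \<in> V"
  moreover obtain B where "\<forall>z\<in>cpolydisc n. cmod (theta m p n j z) \<le> B"
    using bounded_theta_on_cpolydisc by blast
  ultimately show "mult_op (theta m p n j) h \<in> V"
    using mult[OF P_theta] polydisc_subset_cpolydisc by blast
next
  fix c h assume "h \<in> V"
  then show "N (op_poly n c (\<lambda>j. mult_op (theta m p n j)) h)
               \<le> (SUP w\<in>theta_map m p n ` cpolydisc n. cmod (mpoly_eval n c w)) * N h"
    unfolding op_poly_mult_op
    using mult[OF P_poly] cmod_mpoly_eval_theta_le_SUP polydisc_subset_cpolydisc by blast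
qed (auto simp: mult_op_def algebra_simps)

theorem proposition4p11:
  fixes m p n :: nat
  assumes "0 < m" "0 < p" "p dvd m" "1 < n"
  shows "(\<forall>lam::real. lam > 1 \<longrightarrow>
            theta_contraction m p n (L2space n lam) (L2norm n lam) (\<lambda>j. mult_op (theta m p n j)))
       \<and> (\<forall>lam::real. lam \<ge> 1 \<longrightarrow>
            theta_contraction m p n (A_space n lam) (A_norm n lam) (\<lambda>j. mult_op (theta m p n j)))"
proof (intro conjI allI impI)
  fix lam :: real
  have theta_measurable: "theta m p n j \<in> borel_measurable (polydisc_measure n lam)" for j
    unfolding polydisc_measure_def by (rule measurable_theta) simp
  show "theta_contraction m p n (L2space n lam) (L2norm n lam) (\<lambda>j. mult_op (theta m p n j))"
    by (intro theta_contraction_mult_opI[where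
          P = "\<lambda>g. g \<in> borel_measurable (polydisc_measure n lam)"]
        L2space_mult_op theta_measurable measurable_mpoly_eval)
  show "theta_contraction m p n (A_space n lam) (A_norm n lam) (\<lambda>j. mult_op (theta m p n j))"
    by (rule theta_contraction_mult_opI[where
          P = "\<lambda>g. holo_polydisc n g \<and> g \<in> borel_measurable (polydisc_measure n lam)"],
        erule conjE, rule A_space_mult_op)
      (auto intro: holo_polydisc_theta holo_polydisc_mpoly_eval theta_measurable measurable_mpoly_eval)
qed

end
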